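(* The module $\varphi(M_{s,\ell})$ is generated as an $\mathbb F_q[X]$-module by the $\ell+1$ polynomials $\bar P^{(t)}(X,Y)=\bar G(X)^{s-t}(Y-\bar R(X))^t$ for $0\le t<s$ and $\bar P^{(t)}(X,Y)=(L(X)Y)^{t-s}(Y-\bar R(X))^s$ for $s\le t\le\ell$.
   Context: Let $\mathbb F_q$ be a finite field, $1\le k<n<q$, $\alpha_0,\dots,\alpha_{n-1}$ distinct nonzero elements of $\mathbb F_q$, $w_0,\dots,w_{n-1}$ nonzero elements of $\mathbb F_q$, and $r\in\mathbb F_q^n$ a word with $r_i=0$ for $i=0,\dots,k-1$; let $r_i'=r_i/w_i$. Let $G(X)=\prod_{i=0}^{n-1}(X-\alpha_i)$, $R(X)$ the unique polynomial of degree $<n$ with $R(\alpha_i)=r_i'$, $L(X)=\prod_{i=0}^{k-1}(X-\alpha_i)$, $\bar G=G/L$ and $\bar R=R/L$ (both polynomials). For positive integers $s\le\ell$, $M_{s,\ell}$ is the $\mathbb F_q[X]$-module of all $Q\in\mathbb F_q[X,Y]$ of $Y$-degree at most $\ell$ such that for each $i$, $Q(X+\alpha_i,Y+r_i')$ has no monomials of total degree less than $s$. Define $\varphi(Q)(X,Y)=L(X)^{-s}Q(X,L(X)Y)$ for $Q\in M_{s,\ell}$ (this lies in $\mathbb F_q[X,Y]$), and let $\varphi(M_{s,\ell})$ be the image. *)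

theory Defs
  imports "HOL-Computational_Algebra.Polynomial"
begin

text \<open>Bivariate polynomials in X and Y are represented as elements of type
  'a poly poly: polynomials in Y whose coefficients are polynomials in X.
  Thus coeff (coeff Q j) i is the coefficient of X^i Y^j.\<close>

definition shiftXY :: "'a::comm_ring_1 poly poly \<Rightarrow> 'a \<Rightarrow> 'a \<Rightarrow> 'a poly poly" where
  "shiftXY Q a b = map_poly (\<lambda>c. pcompose c [:a, 1:]) (pcompose Q [:[:b:], 1:])"
  \<comment> \<open>Q(X + a, Y + b)\<close>

definition no_low_monomials :: "nat \<Rightarrow> 'a::zero poly poly \<Rightarrow> bool" where
  "no_low_monomials s P \<longleftrightarrow> (\<forall>i j. i + j < s \<longrightarrow> coeff (coeff P j) i = 0)"

definition Mmod :: "nat \<Rightarrow> nat \<Rightarrow> nat \<Rightarrow> (nat \<Rightarrow> 'a::comm_ring_1) \<Rightarrow> (nat \<Rightarrow> 'a) \<Rightarrow> 'a poly poly set" where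
  "Mmod s l n alpha r' = {Q. degree Q \<le> l \<and>
      (\<forall>i<n. no_low_monomials s (shiftXY Q (alpha i) (r' i)))}"

definition phi :: "nat \<Rightarrow> 'a::field poly \<Rightarrow> 'a poly poly \<Rightarrow> 'a poly poly" where
  "phi s L Q = map_poly (\<lambda>c. c div L ^ s) (pcompose Q [:0, L:])"
  \<comment> \<open>L(X)^{-s} Q(X, L(X) Y)\<close>

end

theory Submission
  imports Defs
begin

text \<open>Substituting Y + R(X) for Y moves each interpolation point (\<alpha>_i, r'_i) to (\<alpha>_i, 0),
  where vanishing to order s means that (X - \<alpha>_i)^(s-j) divides the coefficient of Y^j. Since
  the \<alpha>_i are distinct, this says that G^(s-j) divides that coefficient for j < s, and expanding
  Q(X, Y) = T(X, Y - R(X)) in powers of Y - R shows that M_{s,\<ell>} is spanned by G^(s-t) (Y - R)^t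
  for t < s and Y^(t-s) (Y - R)^s for s \<le> t \<le> \<ell>. As R vanishes at \<alpha>_0, ..., \<alpha>_(k-1), L divides
  both G and R, so substituting L Y for Y multiplies each of these generators by exactly L^s;
  dividing by L^s gives the generators of \<phi>(M_{s,\<ell>}).\<close>

lemma pcompose_power: "(p ^ n) \<circ>\<^sub>p q = (p \<circ>\<^sub>p q) ^ n"
  by (induction n) (simp_all add: pcompose_1 pcompose_mult)

lemma pcompose_dvd: "p dvd q \<Longrightarrow> p \<circ>\<^sub>p r dvd q \<circ>\<^sub>p r"
  by (auto simp: pcompose_mult elim!: dvdE)

lemma monom_dvd_pcompose_shift_iff:
  fixes c :: "'a::comm_ring_1 poly"
  shows "monom 1 m dvd c \<circ>\<^sub>p [:a, 1:] \<longleftrightarrow> [:-a, 1:] ^ m dvd c"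
proof -
  have shift_back: "[:-a, 1:] ^ m = monom 1 m \<circ>\<^sub>p [:-a, 1:]" "c = (c \<circ>\<^sub>p [:a, 1:]) \<circ>\<^sub>p [:-a, 1:]"
    by (simp_all add: monom_altdef pcompose_pCons pcompose_assoc[symmetric] pcompose_power)
  have "monom 1 m = [:-a, 1:] ^ m \<circ>\<^sub>p [:a, 1:]"
    by (simp add: monom_altdef pcompose_pCons pcompose_power)
  then show ?thesis
    using shift_back pcompose_dvd by metis
qed

lemma pcompose_as_sum: "p \<circ>\<^sub>p q = (\<Sum>j\<le>degree p. smult (coeff p j) (q ^ j))"
proof -
  have "degree (map_poly (\<lambda>x. [:x:]) p) = degree p"
    by (rule degree_map_poly) simp
  then show ?thesis
    unfolding pcompose_altdef poly_altdef by (simp add: coeff_map_poly)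
qed

lemma smult_sum_right: "smult a (sum f A) = (\<Sum>x\<in>A. smult a (f x))"
  by (induction A rule: infinite_finite_induct) (simp_all add: smult_add_right)

text \<open>\<open>vanishes_to_order s a P\<close> says \<open>P \<in> (X - a, Y)\<^sup>s\<close>; the condition is vacuous for \<open>j \<ge> s\<close>.\<close>

definition vanishes_to_order :: "nat \<Rightarrow> 'a::comm_ring_1 \<Rightarrow> 'a poly poly \<Rightarrow> bool" where
  "vanishes_to_order s a P \<longleftrightarrow> (\<forall>j. [:-a, 1:] ^ (s - j) dvd coeff P j)"

lemma vanishes_to_order_0 [simp]: "vanishes_to_order 0 a P"
  by (simp add: vanishes_to_order_def)

lemma vanishes_to_order_mono:
  assumes "vanishes_to_order s a P" "s' \<le> s"
  shows "vanishes_to_order s' a P"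
  unfolding vanishes_to_order_def
proof
  fix j
  have "[:-a, 1:] ^ (s' - j) dvd [:-a, 1:] ^ (s - j)"
    using assms(2) by (intro le_imp_power_dvd) simp
  also have "\<dots> dvd coeff P j"
    using assms(1) by (simp add: vanishes_to_order_def)
  finally show "[:-a, 1:] ^ (s' - j) dvd coeff P j" .
qed

lemma vanishes_to_order_add:
  "vanishes_to_order s a P \<Longrightarrow> vanishes_to_order s a Q \<Longrightarrow> vanishes_to_order s a (P + Q)"
  by (simp add: vanishes_to_order_def)

lemma vanishes_to_order_sum:
  "(\<And>x. x \<in> A \<Longrightarrow> vanishes_to_order s a (f x)) \<Longrightarrow> vanishes_to_order s a (sum f A)"
  by (induction A rule: infinite_finite_induct)
     (auto simp: vanishes_to_order_def intro: vanishes_to_order_add)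

lemma vanishes_to_order_mult:
  assumes "vanishes_to_order s a P" "vanishes_to_order s' a Q"
  shows "vanishes_to_order (s + s') a (P * Q)"
  unfolding vanishes_to_order_def coeff_mult
proof (intro allI dvd_sum)
  fix j u :: nat assume "u \<in> {..j}"
  then have "[:-a, 1:] ^ (s + s' - j) dvd [:-a, 1:] ^ (s - u) * [:-a, 1:] ^ (s' - (j - u))"
    by (auto simp: power_add[symmetric] intro: le_imp_power_dvd)
  also have "\<dots> dvd coeff P u * coeff Q (j - u)"
    using assms by (simp add: vanishes_to_order_def mult_dvd_mono)
  finally show "[:-a, 1:] ^ (s + s' - j) dvd coeff P u * coeff Q (j - u)" .
qed

lemma vanishes_to_order_power:
  "vanishes_to_order s a P \<Longrightarrow> vanishes_to_order (s * m) a (P ^ m)"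
proof (induction m)
  case (Suc m)
  then show ?case using vanishes_to_order_mult[of s a P "s * m" "P ^ m"] by simp
qed simp

lemma vanishes_to_order_const_iff:
  "vanishes_to_order s a [:c:] \<longleftrightarrow> [:-a, 1:] ^ s dvd c"
proof
  show "vanishes_to_order s a [:c:] \<Longrightarrow> [:-a, 1:] ^ s dvd c"
    unfolding vanishes_to_order_def by (metis coeff_pCons_0 diff_zero)
  show "[:-a, 1:] ^ s dvd c \<Longrightarrow> vanishes_to_order s a [:c:]"
    unfolding vanishes_to_order_def by (auto simp: coeff_pCons split: nat.split)
qed

lemma vanishes_to_order_const_mult:
  "[:-a, 1:] ^ s dvd c \<Longrightarrow> vanishes_to_order s' a P \<Longrightarrow> vanishes_to_order (s + s') a ([:c:] * P)"
  by (rule vanishes_to_order_mult) (simp_all add: vanishes_to_order_const_iff)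

lemma vanishes_to_order_smult:
  "vanishes_to_order s a P \<Longrightarrow> vanishes_to_order s a (smult c P)"
  using vanishes_to_order_const_mult[of a 0 c s P] by simp

lemma vanishes_to_order_linear:
  "poly S a = 0 \<Longrightarrow> vanishes_to_order 1 a [:S, 1:]"
  unfolding vanishes_to_order_def
  by (auto simp: coeff_pCons poly_eq_0_iff_dvd split: nat.split)

lemma vanishes_to_order_pCons:
  assumes "vanishes_to_order s a (pCons c P)"
  shows "[:-a, 1:] ^ s dvd c" "vanishes_to_order (s - 1) a P"
proof -
  show "[:-a, 1:] ^ s dvd c"
    using spec[OF assms[unfolded vanishes_to_order_def], of 0] by simp
  show "vanishes_to_order (s - 1) a P"
    unfolding vanishes_to_order_def
  proof
    fix j
    show "[:-a, 1:] ^ (s - 1 - j) dvd coeff P j"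
      using spec[OF assms[unfolded vanishes_to_order_def], of "Suc j"] by simp
  qed
qed

lemma vanishes_to_order_pcompose:
  assumes "poly S a = 0"
  shows "vanishes_to_order s a P \<Longrightarrow> vanishes_to_order s a (P \<circ>\<^sub>p [:S, 1:])"
proof (induction P arbitrary: s)
  case (pCons c P)
  have "vanishes_to_order (1 + (s - 1)) a ([:S, 1:] * (P \<circ>\<^sub>p [:S, 1:]))"
    using vanishes_to_order_linear[OF assms] pCons.IH[OF vanishes_to_order_pCons(2)[OF pCons.prems]]
    by (rule vanishes_to_order_mult)
  then have "vanishes_to_order s a ([:S, 1:] * (P \<circ>\<^sub>p [:S, 1:]))"
    by (rule vanishes_to_order_mono) simp
  moreover have "vanishes_to_order s a [:c:]"
    using vanishes_to_order_pCons(1)[OF pCons.prems] by (simp add: vanishes_to_order_const_iff)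
  ultimately show ?case by (simp add: pcompose_pCons vanishes_to_order_add)
qed simp

lemma vanishes_to_order_pcompose_iff:
  assumes "poly S a = 0"
  shows "vanishes_to_order s a (P \<circ>\<^sub>p [:S, 1:]) \<longleftrightarrow> vanishes_to_order s a P"
proof
  have "P = (P \<circ>\<^sub>p [:S, 1:]) \<circ>\<^sub>p [:-S, 1:]"
    by (simp add: pcompose_assoc[symmetric] pcompose_pCons)
  moreover have "poly (-S) a = 0" using assms by simp
  ultimately show "vanishes_to_order s a (P \<circ>\<^sub>p [:S, 1:]) \<Longrightarrow> vanishes_to_order s a P"
    by (metis vanishes_to_order_pcompose)
qed (rule vanishes_to_order_pcompose[OF assms])

lemma no_low_monomials_shift_iff:
  "no_low_monomials s (map_poly (\<lambda>c. c \<circ>\<^sub>p [:a, 1:]) P) \<longleftrightarrow> vanishes_to_order s a P"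
proof -
  have "no_low_monomials s Q \<longleftrightarrow> (\<forall>j. monom 1 (s - j) dvd coeff Q j)" for Q :: "'a poly poly"
    by (auto simp: no_low_monomials_def monom_1_dvd_iff')
  then show ?thesis
    by (simp add: vanishes_to_order_def coeff_map_poly monom_dvd_pcompose_shift_iff)
qed

lemma no_low_monomials_shiftXY_iff:
  assumes "poly R a = b"
  shows "no_low_monomials s (shiftXY Q a b) \<longleftrightarrow> vanishes_to_order s a (Q \<circ>\<^sub>p [:R, 1:])"
proof -
  have "Q \<circ>\<^sub>p [:R, 1:] = (Q \<circ>\<^sub>p [:[:b:], 1:]) \<circ>\<^sub>p [:R - [:b:], 1:]"
    by (simp add: pcompose_assoc[symmetric] pcompose_pCons)
  moreover have "poly (R - [:b:]) a = 0" using assms by simp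
  ultimately show ?thesis
    by (simp add: shiftXY_def no_low_monomials_shift_iff vanishes_to_order_pcompose_iff)
qed

lemma linear_power_dvd_mult_cancel:
  fixes p q :: "'a::idom poly"
  assumes "poly p a \<noteq> 0" "[:-a, 1:] ^ m dvd p * q"
  shows "[:-a, 1:] ^ m dvd q"
proof (cases "q = 0")
  case False
  have "p \<noteq> 0" "order a p = 0"
    using assms(1) order_root by auto
  with False have "order a (p * q) = order a q"
    by (simp add: order_mult)
  with assms(2) False \<open>p \<noteq> 0\<close> show ?thesis
    by (simp add: order_divides)
qed simp

lemma prod_linear_power_dvd:
  fixes alpha :: "'b \<Rightarrow> 'a::idom"
  assumes "finite A" "inj_on alpha A" "\<And>i. i \<in> A \<Longrightarrow> [:-alpha i, 1:] ^ m dvd c"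
  shows "(\<Prod>i\<in>A. [:-alpha i, 1:]) ^ m dvd c"
  using assms
proof (induction A rule: finite_induct)
  case (insert x A)
  define P where "P = (\<Prod>i\<in>A. [:-alpha i, 1:]) ^ m"
  have "inj_on alpha A" "alpha x \<notin> alpha ` A"
    using insert.prems(1) insert.hyps(2) by (simp_all add: inj_on_insert)
  have "P dvd c"
    unfolding P_def using insert.prems(2) by (intro insert.IH[OF \<open>inj_on alpha A\<close>]) simp
  then obtain d where d: "c = P * d" ..
  have "poly P (alpha x) \<noteq> 0"
    using \<open>alpha x \<notin> alpha ` A\<close> insert.hyps(1) by (auto simp: P_def poly_prod)
  moreover have "[:-alpha x, 1:] ^ m dvd P * d"
    using insert.prems(2) d by simp
  ultimately have "[:-alpha x, 1:] ^ m dvd d"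
    by (rule linear_power_dvd_mult_cancel)
  then have "[:-alpha x, 1:] ^ m * P dvd c"
    using d by (simp add: mult.commute mult_dvd_mono)
  then show ?case
    by (simp only: P_def prod.insert[OF insert.hyps] power_mult_distrib)
qed simp

definition poly_span :: "nat \<Rightarrow> (nat \<Rightarrow> 'a::comm_ring_1 poly poly) \<Rightarrow> 'a poly poly set" where
  "poly_span l P = {(\<Sum>t\<le>l. smult (c t) (P t)) | c. True}"

lemma poly_spanI: "x = (\<Sum>t\<le>l. smult (c t) (P t)) \<Longrightarrow> x \<in> poly_span l P"
  unfolding poly_span_def by blast

lemma poly_spanE:
  assumes "x \<in> poly_span l P"
  obtains c where "x = (\<Sum>t\<le>l. smult (c t) (P t))"
  using assms unfolding poly_span_def by blast

lemma poly_span_zero: "0 \<in> poly_span l P"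
  by (rule poly_spanI[where c = "\<lambda>_. 0"]) simp

lemma poly_span_add:
  assumes "x \<in> poly_span l P" "y \<in> poly_span l P"
  shows "x + y \<in> poly_span l P"
proof -
  from assms obtain c c' where "x = (\<Sum>t\<le>l. smult (c t) (P t))" "y = (\<Sum>t\<le>l. smult (c' t) (P t))"
    by (elim poly_spanE)
  then have "x + y = (\<Sum>t\<le>l. smult (c t + c' t) (P t))"
    by (simp add: smult_add_left sum.distrib)
  then show ?thesis by (rule poly_spanI)
qed

lemma poly_span_smult:
  assumes "x \<in> poly_span l P"
  shows "smult a x \<in> poly_span l P"
proof -
  from assms obtain c where "x = (\<Sum>t\<le>l. smult (c t) (P t))"
    by (elim poly_spanE)
  then have "smult a x = (\<Sum>t\<le>l. smult (a * c t) (P t))"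
    by (simp add: smult_sum_right)
  then show ?thesis by (rule poly_spanI)
qed

lemma poly_span_sum: "(\<And>x. x \<in> A \<Longrightarrow> f x \<in> poly_span l P) \<Longrightarrow> sum f A \<in> poly_span l P"
  by (induction A rule: infinite_finite_induct) (auto simp: poly_span_zero poly_span_add)

lemma generator_in_poly_span:
  assumes "t \<le> l"
  shows "P t \<in> poly_span l P"
proof -
  have "(\<Sum>u\<le>l. smult (if u = t then 1 else 0) (P u)) = (\<Sum>u\<le>l. if u = t then P u else 0)"
    by (intro sum.cong) auto
  also have "\<dots> = P t"
    using assms by (simp add: sum.delta)
  finally show ?thesis
    by (intro poly_spanI) (rule sym)
qed

lemma image_poly_span:
  assumes "\<And>c. f (\<Sum>t\<le>l. smult (c t) (P t)) = (\<Sum>t\<le>l. smult (c t) (P' t))"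
  shows "f ` poly_span l P = poly_span l P'"
proof (intro equalityI subsetI)
  fix y assume "y \<in> f ` poly_span l P"
  then obtain c where "y = f (\<Sum>t\<le>l. smult (c t) (P t))"
    by (auto elim: poly_spanE)
  then show "y \<in> poly_span l P'"
    by (intro poly_spanI) (simp add: assms)
next
  fix y assume "y \<in> poly_span l P'"
  then obtain c where "y = f (\<Sum>t\<le>l. smult (c t) (P t))"
    by (auto elim: poly_spanE simp: assms)
  then show "y \<in> f ` poly_span l P"
    by (blast intro: poly_spanI)
qed

lemma phi_image_poly_span:
  fixes L :: "'a::field poly"
  assumes "L \<noteq> 0" "\<And>t. P t \<circ>\<^sub>p [:0, L:] = smult (L ^ s) (P' t)"
  shows "phi s L ` poly_span l P = poly_span l P'"
proof (rule image_poly_span)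
  fix c
  have "(\<Sum>t\<le>l. smult (c t) (P t)) \<circ>\<^sub>p [:0, L:] = smult (L ^ s) (\<Sum>t\<le>l. smult (c t) (P' t))"
    by (simp add: pcompose_sum pcompose_smult assms(2) smult_sum_right mult.commute)
  then show "phi s L (\<Sum>t\<le>l. smult (c t) (P t)) = (\<Sum>t\<le>l. smult (c t) (P' t))"
    by (intro poly_eqI) (simp add: phi_def coeff_map_poly assms(1))
qed

definition interpolation_generator :: "nat \<Rightarrow> 'a poly \<Rightarrow> 'a poly \<Rightarrow> nat \<Rightarrow> 'a::comm_ring_1 poly poly" where
  "interpolation_generator s G R t =
     (if t < s then smult (G ^ (s - t)) ([:-R, 1:] ^ t) else [:0, 1:] ^ (t - s) * [:-R, 1:] ^ s)"

lemma degree_interpolation_generator: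
  fixes G R :: "'a::idom poly"
  shows "degree (interpolation_generator s G R t) \<le> t"
proof (cases "t < s")
  case True
  then show ?thesis
    using degree_smult_le[of "G ^ (s - t)" "[:-R, 1:] ^ t"]
    by (simp add: interpolation_generator_def degree_linear_power)
next
  case False
  then show ?thesis
    using degree_mult_le[of "[:0, 1:] ^ (t - s)" "[:-R, 1:] ^ s"]
    by (simp add: interpolation_generator_def degree_linear_power)
qed

lemma interpolation_generator_pcompose:
  "interpolation_generator s G R t \<circ>\<^sub>p [:R, 1:] =
     (if t < s then [:G ^ (s - t):] * [:0, 1:] ^ t else [:R, 1:] ^ (t - s) * [:0, 1:] ^ s)"
  by (simp add: interpolation_generator_def pcompose_mult pcompose_smult pcompose_power pcompose_pCons)

lemma vanishes_to_order_interpolation_generator: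
  assumes "poly G a = 0"
  shows "vanishes_to_order s a (interpolation_generator s G R t \<circ>\<^sub>p [:R, 1:])"
proof -
  have Y: "vanishes_to_order m a ([:0, 1:] ^ m)" for m
    using vanishes_to_order_power[OF vanishes_to_order_linear, of 0 a m] by simp
  show ?thesis
  proof (cases "t < s")
    case True
    have "[:-a, 1:] ^ (s - t) dvd G ^ (s - t)"
      using assms by (simp add: dvd_power_same poly_eq_0_iff_dvd)
    then have "vanishes_to_order (s - t + t) a ([:G ^ (s - t):] * [:0, 1:] ^ t)"
      using Y by (rule vanishes_to_order_const_mult)
    with True show ?thesis
      by (simp add: interpolation_generator_pcompose)
  next
    case False
    have "vanishes_to_order (0 + s) a ([:R, 1:] ^ (t - s) * [:0, 1:] ^ s)"
      by (rule vanishes_to_order_mult[OF vanishes_to_order_0 Y])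
    with False show ?thesis
      by (simp add: interpolation_generator_pcompose)
  qed
qed

lemma mult_power_in_poly_span_interpolation_generator:
  fixes P :: "'a::idom poly poly"
  assumes "degree P + s \<le> l"
  shows "P * [:-R, 1:] ^ s \<in> poly_span l (interpolation_generator s G R)"
proof -
  have "P * [:-R, 1:] ^ s = (\<Sum>m\<le>degree P. smult (coeff P m) ([:0, 1:] ^ m * [:-R, 1:] ^ s))"
    by (subst poly_as_sum_of_monoms[of P, symmetric])
       (simp add: monom_altdef sum_distrib_right)
  also have "\<dots> \<in> poly_span l (interpolation_generator s G R)"
  proof (rule poly_span_sum)
    fix m assume "m \<in> {..degree P}"
    then have "s + m \<le> l" using assms by simp
    moreover have "interpolation_generator s G R (s + m) = [:0, 1:] ^ m * [:-R, 1:] ^ s"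
      by (simp add: interpolation_generator_def)
    ultimately show "smult (coeff P m) ([:0, 1:] ^ m * [:-R, 1:] ^ s) \<in> poly_span l (interpolation_generator s G R)"
      by (metis generator_in_poly_span poly_span_smult)
  qed
  finally show ?thesis .
qed

lemma in_poly_span_interpolation_generator:
  fixes Q :: "'a::idom poly poly"
  assumes "degree Q \<le> l" "\<And>j. j < s \<Longrightarrow> G ^ (s - j) dvd coeff (Q \<circ>\<^sub>p [:R, 1:]) j"
  shows "Q \<in> poly_span l (interpolation_generator s G R)"
proof -
  define T where "T = Q \<circ>\<^sub>p [:R, 1:]"
  have "degree T \<le> l"
    using assms(1) by (simp add: T_def degree_pcompose)
  have "Q = T \<circ>\<^sub>p [:-R, 1:]"
    by (simp add: T_def pcompose_assoc[symmetric] pcompose_pCons)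
  also have "\<dots> = (\<Sum>j\<le>degree T. smult (coeff T j) ([:-R, 1:] ^ j))"
    by (rule pcompose_as_sum)
  also have "\<dots> \<in> poly_span l (interpolation_generator s G R)"
  proof (rule poly_span_sum)
    fix j assume "j \<in> {..degree T}"
    with \<open>degree T \<le> l\<close> have "j \<le> l" by simp
    show "smult (coeff T j) ([:-R, 1:] ^ j) \<in> poly_span l (interpolation_generator s G R)"
    proof (cases "j < s")
      case True
      then obtain b where "coeff T j = G ^ (s - j) * b"
        using assms(2) unfolding T_def by blast
      then have "smult (coeff T j) ([:-R, 1:] ^ j) = smult b (interpolation_generator s G R j)"
        using True by (simp add: interpolation_generator_def mult.commute)
      then show ?thesis
        using poly_span_smult[OF generator_in_poly_span[OF \<open>j \<le> l\<close>]] by simp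
    next
      case False
      then have "[:-R, 1:] ^ j = [:-R, 1:] ^ (j - s) * [:-R, 1:] ^ s"
        by (simp add: power_add[symmetric])
      moreover have "[:-R, 1:] ^ (j - s) * [:-R, 1:] ^ s \<in> poly_span l (interpolation_generator s G R)"
        using False \<open>j \<le> l\<close>
        by (intro mult_power_in_poly_span_interpolation_generator) (simp add: degree_linear_power)
      ultimately show ?thesis
        by (simp add: poly_span_smult)
    qed
  qed
  finally show ?thesis .
qed

lemma interpolation_generator_pcompose_scale:
  fixes L Gb Rb :: "'a::comm_ring_1 poly"
  shows "interpolation_generator s (L * Gb) (L * Rb) t \<circ>\<^sub>p [:0, L:] = smult (L ^ s)
           (if t < s then [:Gb ^ (s - t):] * [:-Rb, 1:] ^ t else [:0, L:] ^ (t - s) * [:-Rb, 1:] ^ s)"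
proof -
  have Y: "[:-(L * Rb), 1:] \<circ>\<^sub>p [:0, L:] = smult L [:-Rb, 1:]"
    by (simp add: pcompose_pCons)
  show ?thesis
  proof (cases "t < s")
    case True
    have "L ^ s = L ^ (s - t) * L ^ t"
      using True by (simp add: power_add[symmetric])
    then have L: "(L * Gb) ^ (s - t) * L ^ t = L ^ s * Gb ^ (s - t)"
      by (simp add: power_mult_distrib mult_ac)
    have "interpolation_generator s (L * Gb) (L * Rb) t \<circ>\<^sub>p [:0, L:]
        = smult ((L * Gb) ^ (s - t)) ((smult L [:-Rb, 1:]) ^ t)"
      using True by (simp only: interpolation_generator_def if_True pcompose_smult pcompose_power Y)
    also have "\<dots> = smult (L ^ s * Gb ^ (s - t)) ([:-Rb, 1:] ^ t)"
      by (simp only: smult_power smult_smult L)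
    finally show ?thesis
      using True by simp
  next
    case False
    have "[:0, 1:] \<circ>\<^sub>p [:0, L:] = [:0, L:]"
      by (simp add: pcompose_pCons)
    then have "interpolation_generator s (L * Gb) (L * Rb) t \<circ>\<^sub>p [:0, L:]
        = [:0, L:] ^ (t - s) * (smult L [:-Rb, 1:]) ^ s"
      using False by (simp only: interpolation_generator_def if_False pcompose_mult pcompose_power Y)
    also have "\<dots> = smult (L ^ s) ([:0, L:] ^ (t - s) * [:-Rb, 1:] ^ s)"
      by (simp only: smult_power mult_smult_right)
    finally show ?thesis
      using False by simp
  qed
qed

lemma Mmod_eq_poly_span:
  fixes alpha r' :: "nat \<Rightarrow> 'a::field" and R :: "'a poly"
  assumes "inj_on alpha {..<n}" "\<And>i. i < n \<Longrightarrow> poly R (alpha i) = r' i"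
  shows "Mmod s l n alpha r' = poly_span l (interpolation_generator s (\<Prod>i<n. [:-alpha i, 1:]) R)"
    (is "_ = poly_span l ?P")
proof (intro equalityI subsetI)
  let ?G = "\<Prod>i<n. [:-alpha i, 1:]"
  have Mmod_iff: "Q \<in> Mmod s l n alpha r' \<longleftrightarrow>
      degree Q \<le> l \<and> (\<forall>i<n. vanishes_to_order s (alpha i) (Q \<circ>\<^sub>p [:R, 1:]))" for Q
  proof -
    have "no_low_monomials s (shiftXY Q (alpha i) (r' i)) \<longleftrightarrow>
        vanishes_to_order s (alpha i) (Q \<circ>\<^sub>p [:R, 1:])" if "i < n" for i
      by (rule no_low_monomials_shiftXY_iff[OF assms(2)[OF that]])
    then show ?thesis
      unfolding Mmod_def by blast
  qed
  fix Q
  show "Q \<in> poly_span l ?P" if "Q \<in> Mmod s l n alpha r'"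
  proof (rule in_poly_span_interpolation_generator)
    show "degree Q \<le> l"
      using that Mmod_iff by blast
    show "?G ^ (s - j) dvd coeff (Q \<circ>\<^sub>p [:R, 1:]) j" for j
    proof (rule prod_linear_power_dvd[OF finite_lessThan assms(1)])
      fix i assume "i \<in> {..<n}"
      then have "vanishes_to_order s (alpha i) (Q \<circ>\<^sub>p [:R, 1:])"
        using that Mmod_iff by blast
      then show "[:-alpha i, 1:] ^ (s - j) dvd coeff (Q \<circ>\<^sub>p [:R, 1:]) j"
        unfolding vanishes_to_order_def by blast
    qed
  qed
  show "Q \<in> Mmod s l n alpha r'" if "Q \<in> poly_span l ?P"
  proof -
    from that obtain c where Q: "Q = (\<Sum>t\<le>l. smult (c t) (?P t))"
      by (rule poly_spanE)
    have "degree Q \<le> l"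
      unfolding Q
    proof (rule degree_sum_le)
      fix t assume "t \<in> {..l}"
      then show "degree (smult (c t) (?P t)) \<le> l"
        using degree_smult_le[of "c t" "?P t"] degree_interpolation_generator[of s ?G R t] by simp
    qed simp
    moreover have "vanishes_to_order s (alpha i) (Q \<circ>\<^sub>p [:R, 1:])" if "i < n" for i
    proof -
      have "poly ?G (alpha i) = 0"
        using that by (auto simp: poly_prod)
      then have "vanishes_to_order s (alpha i) (?P t \<circ>\<^sub>p [:R, 1:])" for t
        by (rule vanishes_to_order_interpolation_generator)
      then show ?thesis
        unfolding Q pcompose_sum pcompose_smult
        by (intro vanishes_to_order_sum vanishes_to_order_smult)
    qed
    ultimately show ?thesis
      using Mmod_iff by blast
  qed
qed

theorem theorem5:
  fixes alpha w r :: "nat \<Rightarrow> 'a::{finite,field}"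
    and k n s l :: nat
    and R :: "'a poly"
  assumes "1 \<le> k" "k < n" "n < card (UNIV :: 'a set)"
    and "inj_on alpha {..<n}" "\<forall>i<n. alpha i \<noteq> 0"
    and "\<forall>i<n. w i \<noteq> 0"
    and "\<forall>i<k. r i = 0"
    and "degree R < n" "\<forall>i<n. poly R (alpha i) = r i / w i"
    and "1 \<le> s" "s \<le> l"
  shows
    "let G = (\<Prod>i<n. [:- alpha i, 1:]);
         L = (\<Prod>i<k. [:- alpha i, 1:]);
         Gb = G div L; Rb = R div L;
         Pb = (\<lambda>t. if t < s then [:Gb ^ (s - t):] * [:- Rb, 1:] ^ t
                   else [:0, L:] ^ (t - s) * [:- Rb, 1:] ^ s)
     in phi s L ` Mmod s l n alpha (\<lambda>i. r i / w i)
          = {(\<Sum>t\<le>l. smult (a t) (Pb t)) | a. True}"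
proof -
  define G where "G = (\<Prod>i<n. [:- alpha i, 1:])"
  define L where "L = (\<Prod>i<k. [:- alpha i, 1:])"
  have "L \<noteq> 0" by (simp add: L_def)
  have "L dvd G"
    unfolding L_def G_def using \<open>k < n\<close> by (intro prod_dvd_prod_subset) auto
  have "inj_on alpha {..<k}"
    using \<open>k < n\<close> by (intro inj_on_subset[OF \<open>inj_on alpha {..<n}\<close>]) auto
  then have "L dvd R"
    using prod_linear_power_dvd[of "{..<k}" alpha 1 R] assms(2,7,9)
    by (auto simp: L_def poly_eq_0_iff_dvd[symmetric])
  have "Mmod s l n alpha (\<lambda>i. r i / w i) = poly_span l (interpolation_generator s G R)"
    unfolding G_def using assms(4,9) by (intro Mmod_eq_poly_span) auto
  also have "\<dots> = poly_span l (interpolation_generator s (L * (G div L)) (L * (R div L)))"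
    by (simp only: dvd_mult_div_cancel \<open>L dvd G\<close> \<open>L dvd R\<close>)
  finally have "phi s L ` Mmod s l n alpha (\<lambda>i. r i / w i)
      = phi s L ` poly_span l (interpolation_generator s (L * (G div L)) (L * (R div L)))"
    by simp
  also have "\<dots> = poly_span l (\<lambda>t. if t < s then [:(G div L) ^ (s - t):] * [:- (R div L), 1:] ^ t
                   else [:0, L:] ^ (t - s) * [:- (R div L), 1:] ^ s)"
    by (rule phi_image_poly_span[OF \<open>L \<noteq> 0\<close> interpolation_generator_pcompose_scale])
  finally show ?thesis
    unfolding Let_def G_def[symmetric] L_def[symmetric] poly_span_def .
qed

end
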